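(* Let $N\ge2$, $\alpha,\beta>-1$, let $x_0<\dots<x_N$ be the JGL nodes with Lagrange basis $h_0,\dots,h_N$, and let $\mu\in(k-1,k)$ with $k\in\{1,2\}$. Suppose $Q_j^\mu\in\mathcal P_N$ satisfy: if $k=1$, for $1\le j\le N$, ${}^C D_-^\mu Q_j^\mu(x_i)=\delta_{ij}$ for $1\le i\le N$ and $Q_j^\mu(-1)=0$; if $k=2$, for $1\le j\le N-1$, ${}^C D_-^\mu Q_j^\mu(x_i)=\delta_{ij}$ for $1\le i\le N-1$ and $Q_j^\mu(\pm1)=0$. Let $\mathbf Q^{(\mu)}$ be the matrix with entries $\mathbf Q^{(\mu)}_{lj}=Q_j^\mu(x_l)$, $1\le l,j\le N+1-k$, and let ${}^C\mathbf D^{(\mu)}_{\rm in}$ be the matrix with entries $({}^C D_-^\mu h_j)(x_i)$, $1\le i,j\le N+1-k$. Then $$ \mathbf Q^{(\mu)}\,{}^C\mathbf D^{(\mu)}_{\rm in}={}^C\mathbf D^{(\mu)}_{\rm in}\,\mathbf Q^{(\mu)}=\mathbf I_{N+1-k}. $$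
   Context: For $\rho>0$, $(I_-^\rho u)(x)=\frac{1}{\Gamma(\rho)}\int_{-1}^x (x-y)^{\rho-1}u(y)\,dy$, $D^k=d^k/dx^k$, and for $\mu\in(k-1,k)$ the Caputo derivative is ${}^C D_-^\mu u=I_-^{k-\mu}(D^k u)$. The JGL nodes $x_0<\dots<x_N$ are the zeros of $(1-x^2)\frac{d}{dx}P_N^{(\alpha,\beta)}(x)$ (Jacobi polynomial, Szegő normalization), so $x_0=-1$, $x_N=1$; $h_j\in\mathcal P_N$ is the Lagrange basis polynomial with $h_j(x_i)=\delta_{ij}$. $\mathbf I_m$ is the $m\times m$ identity matrix. *)

theory Defs
  imports "HOL-Analysis.Analysis" "HOL-Computational_Algebra.Polynomial"
begin

(* Jacobi polynomial P_n^{(a,b)} in Szego normalization: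
   P_n^{(a,b)}(x) = sum_{s=0}^n C(n+a, n-s) C(n+b, s) ((x-1)/2)^s ((x+1)/2)^(n-s) *)
definition jacobi_poly :: "real \<Rightarrow> real \<Rightarrow> nat \<Rightarrow> real poly" where
  "jacobi_poly a b n =
     (\<Sum>s\<le>n. smult ((real n + a gchoose (n - s)) * (real n + b gchoose s))
                 ([:-1/2, 1/2:] ^ s * [:1/2, 1/2:] ^ (n - s)))"

(* (1 - x^2) * d/dx P_N^{(a,b)}(x); its zeros are the JGL nodes *)
definition jgl_poly :: "real \<Rightarrow> real \<Rightarrow> nat \<Rightarrow> real poly" where
  "jgl_poly a b N = [:1, 0, -1:] * pderiv (jacobi_poly a b N)"

definition lagrange_basis :: "(nat \<Rightarrow> real) \<Rightarrow> nat \<Rightarrow> nat \<Rightarrow> real poly" where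
  "lagrange_basis x N j =
     (\<Prod>i\<in>{..N} - {j}. smult (1 / (x j - x i)) [:- x i, 1:])"

definition RL_int :: "real \<Rightarrow> (real \<Rightarrow> real) \<Rightarrow> real \<Rightarrow> real" where
  "RL_int \<rho> u x = (1 / Gamma \<rho>) * integral {-1..x} (\<lambda>y. (x - y) powr (\<rho> - 1) * u y)"

definition caputo :: "real \<Rightarrow> real poly \<Rightarrow> real \<Rightarrow> real" where
  "caputo \<mu> u x = (let k = nat \<lceil>\<mu>\<rceil> in RL_int (real k - \<mu>) (poly ((pderiv ^^ k) u)) x)"

end

theory Submission
  imports Defs "Jordan_Normal_Form.Determinant"
begin

text \<open>Expanding Q_j in the Lagrange basis and using linearity of the Caputo derivative gives
(D Q_j)(x_l) = sum_m Q_j(x_m) (D h_m)(x_l). The terms with m outside the interior index range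
vanish because Q_j vanishes at x_0 = -1 (and at x_N = 1 when k = 2); these are the extreme nodes
since (1 - x^2) P_N' has no zeros outside [-1, 1]. Hence the defining conditions of the Q_j say
D_in Q = I, and a one-sided inverse of a square matrix is two-sided.\<close>

lemma powr_kernel_integrable:
  fixes a x \<rho> :: real and f :: "real \<Rightarrow> real"
  assumes rho: "\<rho> > 0" and f: "continuous_on {a..x} f"
  shows "(\<lambda>y. (x - y) powr (\<rho> - 1) * f y) integrable_on {a..x}"
proof (cases "a \<le> x")
  case False
  then show ?thesis by (simp add: integrable_on_empty)
next
  case True
  have "(\<lambda>t. t powr (\<rho> - 1)) integrable_on cbox 0 (x - a)"
    using integrable_on_powr_from_0[of "\<rho> - 1" "x - a"] rho True by simp
  from integrable_affinity[OF this, of "-1" x]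
  have "(\<lambda>y. (x - y) powr (\<rho> - 1)) integrable_on (\<lambda>y. x - y) ` {0..x - a}"
    by simp
  moreover have "(\<lambda>y. x - y) ` {0..x - a} = {a..x}"
    by (auto simp: image_iff intro!: bexI[where x="x - _"])
  ultimately have "(\<lambda>y. (x - y) powr (\<rho> - 1)) absolutely_integrable_on {a..x}"
    by (subst absolutely_integrable_on_iff_nonneg) auto
  moreover have "f \<in> borel_measurable (lebesgue_on {a..x})"
    by (rule continuous_imp_measurable_on_sets_lebesgue[OF f]) auto
  moreover have "bounded (f ` {a..x})"
    by (rule compact_imp_bounded, rule compact_continuous_image[OF f]) auto
  ultimately have "(\<lambda>y. f y * (x - y) powr (\<rho> - 1)) absolutely_integrable_on {a..x}"
    by (intro absolutely_integrable_bounded_measurable_product_real) auto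
  then show ?thesis
    using set_lebesgue_integral_eq_integral(1) by (fastforce simp: mult.commute)
qed

lemma RL_int_sum:
  assumes rho: "\<rho> > 0" and A: "finite A"
    and f: "\<And>m. m \<in> A \<Longrightarrow> continuous_on {-1..x} (f m)"
  shows "RL_int \<rho> (\<lambda>y. \<Sum>m\<in>A. c m * f m y) x
    = (\<Sum>m\<in>A. c m * RL_int \<rho> (f m) x)"
proof -
  have "integral {-1..x} (\<lambda>y. (x - y) powr (\<rho> - 1) * (\<Sum>m\<in>A. c m * f m y))
      = integral {-1..x} (\<lambda>y. \<Sum>m\<in>A. c m * ((x - y) powr (\<rho> - 1) * f m y))"
    by (simp add: sum_distrib_left mult_ac)
  also have "\<dots>
      = (\<Sum>m\<in>A. c m * integral {-1..x} (\<lambda>y. (x - y) powr (\<rho> - 1) * f m y))"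
    using A powr_kernel_integrable[OF rho f]
    by (subst integral_sum) (auto intro: integrable_on_mult_right)
  finally show ?thesis
    by (simp add: RL_int_def sum_distrib_left mult_ac)
qed

lemma caputo_sum:
  assumes mu: "real k - 1 < \<mu>" "\<mu> < real k" and A: "finite A"
  shows "caputo \<mu> (\<Sum>m\<in>A. Polynomial.smult (c m) (p m)) t
    = (\<Sum>m\<in>A. c m * caputo \<mu> (p m) t)"
proof -
  have "\<lceil>\<mu>\<rceil> = int k"
    using mu by (intro ceiling_unique) auto
  then have "nat \<lceil>\<mu>\<rceil> = k"
    by simp
  moreover have "real k - \<mu> > 0"
    using mu by simp
  ultimately show ?thesis
    unfolding caputo_def Let_def higher_pderiv_sum higher_pderiv_smult poly_sum poly_smult
    by (auto intro!: RL_int_sum A continuous_intros)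
qed

lemma poly_lagrange_basis_node:
  assumes inj: "inj_on x {..N}" and "i \<le> N" "j \<le> N"
  shows "poly (lagrange_basis x N j) (x i) = (if i = j then 1 else 0)"
proof -
  have "poly (lagrange_basis x N j) (x i) = (\<Prod>l\<in>{..N} - {j}. (x i - x l) / (x j - x l))"
    by (simp add: lagrange_basis_def poly_prod diff_divide_distrib)
  also have "\<dots> = (if i = j then 1 else 0)"
  proof (cases "i = j")
    case True
    have "x j \<noteq> x l" if "l \<in> {..N} - {j}" for l
      using inj that \<open>j \<le> N\<close> by (auto dest: inj_onD)
    then show ?thesis using True by (simp add: prod.neutral)
  qed (use \<open>i \<le> N\<close> in \<open>auto intro: prod_zero\<close>)
  finally show ?thesis .
qed

lemma degree_lagrange_basis_le:
  assumes "j \<le> N"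
  shows "degree (lagrange_basis x N j) \<le> N"
proof -
  have "degree (lagrange_basis x N j)
      \<le> sum (degree \<circ> (\<lambda>l. Polynomial.smult (1 / (x j - x l)) [:- x l, 1:])) ({..N} - {j})"
    unfolding lagrange_basis_def by (rule degree_prod_sum_le) simp
  also have "\<dots> \<le> (\<Sum>l\<in>{..N} - {j}. 1)"
    by (intro sum_mono) (simp add: order_trans[OF degree_smult_le])
  finally show ?thesis using assms by (simp add: card_Diff_singleton)
qed

lemma poly_eq_0_if_roots_exceed_degree:
  fixes p :: "'a::idom poly"
  assumes "finite S" "degree p < card S" "\<And>t. t \<in> S \<Longrightarrow> poly p t = 0"
  shows "p = 0"
proof (rule ccontr)
  assume "p \<noteq> 0"
  then have "card S \<le> card {t. poly p t = 0}"
    using assms(3) poly_roots_finite[OF \<open>p \<noteq> 0\<close>] by (intro card_mono) auto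
  also have "\<dots> \<le> degree p"
    using \<open>p \<noteq> 0\<close> by (rule card_poly_roots_bound)
  finally show False using assms(2) by simp
qed

lemma lagrange_interpolation:
  assumes inj: "inj_on x {..N}" and deg: "degree p \<le> N"
  shows "p = (\<Sum>m\<le>N. Polynomial.smult (poly p (x m)) (lagrange_basis x N m))"
proof -
  let ?q = "p - (\<Sum>m\<le>N. Polynomial.smult (poly p (x m)) (lagrange_basis x N m))"
  have "degree ?q \<le> N"
    by (intro order_trans[OF degree_diff_le_max])
       (auto intro!: degree_sum_le order_trans[OF degree_smult_le] degree_lagrange_basis_le deg)
  then have "degree ?q < card (x ` {..N})"
    using card_image[OF inj] by simp
  moreover have "poly ?q (x i) = 0" if "i \<le> N" for i
    using that by (simp add: poly_sum poly_lagrange_basis_node[OF inj] if_distrib cong: if_cong)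
  ultimately have "?q = 0"
    by (intro poly_eq_0_if_roots_exceed_degree) auto
  then show ?thesis by simp
qed

lemma caputo_eq_nodal_sum:
  assumes mu: "real k - 1 < \<mu>" "\<mu> < real k"
    and inj: "inj_on x {..N}" and deg: "degree p \<le> N" and S: "S \<subseteq> {..N}"
    and vanish: "\<And>m. m \<le> N \<Longrightarrow> m \<notin> S \<Longrightarrow> poly p (x m) = 0"
  shows "caputo \<mu> p t = (\<Sum>m\<in>S. poly p (x m) * caputo \<mu> (lagrange_basis x N m) t)"
proof -
  have "caputo \<mu> p t = (\<Sum>m\<le>N. poly p (x m) * caputo \<mu> (lagrange_basis x N m) t)"
    by (subst lagrange_interpolation[OF inj deg]) (simp add: caputo_sum[OF mu])
  also have "\<dots> = (\<Sum>m\<in>S. poly p (x m) * caputo \<mu> (lagrange_basis x N m) t)"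
    using S vanish by (intro sum.mono_neutral_right) auto
  finally show ?thesis .
qed

lemma gbinomial_pos:
  fixes r :: real
  assumes "real k - 1 < r"
  shows "r gchoose k > 0"
  unfolding gbinomial_altdef_of_nat by (rule prod_pos) (use assms in auto)

lemma poly_pderiv_jacobi_term:
  fixes t :: real
  shows "poly (pderiv ([:-1/2, 1/2:] ^ s * [:1/2, 1/2:] ^ r)) t =
    (of_nat s * (((t - 1) / 2) ^ (s - 1) * ((t + 1) / 2) ^ r) +
     of_nat r * (((t - 1) / 2) ^ s * ((t + 1) / 2) ^ (r - 1))) / 2"
proof -
  have "poly [:-1/2, 1/2:] t = (t - 1) / 2" "poly [:1/2, 1/2:] t = (t + 1) / 2"
    by (simp_all add: field_simps)
  then show ?thesis
    by (simp add: pderiv_mult pderiv_power pderiv_pCons field_simps)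
qed

lemma poly_pderiv_jacobi_poly:
  fixes t :: real
  shows "poly (pderiv (jacobi_poly a b N)) t =
    (\<Sum>s\<le>N. (real N + a gchoose (N - s)) * (real N + b gchoose s) *
       ((of_nat s * (((t - 1) / 2) ^ (s - 1) * ((t + 1) / 2) ^ (N - s)) +
         of_nat (N - s) * (((t - 1) / 2) ^ s * ((t + 1) / 2) ^ (N - s - 1))) / 2))"
  unfolding jacobi_poly_def higher_pderiv_sum[of 1, simplified] poly_sum
  by (simp only: pderiv_smult poly_smult poly_pderiv_jacobi_term)

lemma sgn_power_mult_power:
  fixes U V :: real
  assumes "sgn U = sgn V" "U \<noteq> 0"
  shows "sgn U ^ (i + j) * (U ^ i * V ^ j) = \<bar>U\<bar> ^ i * \<bar>V\<bar> ^ j"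
proof -
  have "U ^ i * V ^ j = (sgn U * \<bar>U\<bar>) ^ i * (sgn V * \<bar>V\<bar>) ^ j"
    by (simp only: sgn_mult_abs)
  also have "\<dots> = sgn U ^ (i + j) * (\<bar>U\<bar> ^ i * \<bar>V\<bar> ^ j)"
    unfolding assms(1) by (simp add: power_mult_distrib power_add mult_ac)
  finally have "sgn U ^ (i + j) * (U ^ i * V ^ j)
      = (sgn U * sgn U) ^ (i + j) * (\<bar>U\<bar> ^ i * \<bar>V\<bar> ^ j)"
    by (simp only: power_mult_distrib mult.assoc)
  moreover have "sgn U * sgn U = 1"
    using assms(2) by (simp add: sgn_if)
  ultimately show ?thesis by simp
qed

text \<open>Outside [-1, 1] the factors (t - 1)/2 and (t + 1)/2 have a common sign \<sigma>, so
\<sigma>^(N-1) times every summand of P_N'(t) is nonnegative (the binomial coefficients are positive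
since a, b > -1), and the summand with s = N is positive.\<close>

lemma poly_pderiv_jacobi_poly_nonzero:
  fixes a b t :: real
  assumes a: "a > -1" and b: "b > -1" and N: "N \<ge> 1" and t: "t \<notin> {-1..1}"
  shows "poly (pderiv (jacobi_poly a b N)) t \<noteq> 0"
proof -
  define U V where "U = (t - 1) / 2" and "V = (t + 1) / 2"
  define \<sigma> where "\<sigma> = sgn U"
  have UV: "sgn U = sgn V" "U \<noteq> 0"
    using t by (auto simp: U_def V_def sgn_if)
  have pow: "\<sigma> ^ (N - 1) * (U ^ i * V ^ j) = \<bar>U\<bar> ^ i * \<bar>V\<bar> ^ j"
    if "i + j = N - 1" for i j
    unfolding \<sigma>_def that[symmetric] by (rule sgn_power_mult_power[OF UV])
  define g where
    "g s = of_nat s * (U ^ (s - 1) * V ^ (N - s))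
      + of_nat (N - s) * (U ^ s * V ^ (N - s - 1))" for s
  have g_nonneg: "0 \<le> \<sigma> ^ (N - 1) * g s" if "s \<le> N" for s
  proof -
    have "0 \<le> of_nat s * (\<sigma> ^ (N - 1) * (U ^ (s - 1) * V ^ (N - s)))"
      using pow[of "s - 1" "N - s"] that by (cases "s = 0") auto
    moreover have "0 \<le> of_nat (N - s) * (\<sigma> ^ (N - 1) * (U ^ s * V ^ (N - s - 1)))"
      using pow[of s "N - s - 1"] that by (cases "s = N") auto
    ultimately show ?thesis by (simp add: g_def algebra_simps)
  qed
  have "\<sigma> ^ (N - 1) * g N = of_nat N * \<bar>U\<bar> ^ (N - 1)"
    using pow[of "N - 1" 0] by (simp add: g_def mult.left_commute)
  then have g_pos: "0 < \<sigma> ^ (N - 1) * g N"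
    using UV(2) N by simp
  define c where "c s = (real N + a gchoose (N - s)) * (real N + b gchoose s)" for s
  have c_pos: "c s > 0" if "s \<le> N" for s
    using that a b by (auto simp: c_def intro!: mult_pos_pos gbinomial_pos)
  have "\<sigma> ^ (N - 1) * poly (pderiv (jacobi_poly a b N)) t
      = (\<Sum>s\<le>N. c s * (\<sigma> ^ (N - 1) * g s) / 2)"
    by (simp add: poly_pderiv_jacobi_poly U_def V_def c_def g_def sum_distrib_left mult_ac)
  also have "\<dots> > 0"
  proof (rule sum_pos2[of _ N])
    show "0 < c N * (\<sigma> ^ (N - 1) * g N) / 2"
      using g_pos c_pos[of N] by simp
    show "0 \<le> c s * (\<sigma> ^ (N - 1) * g s) / 2" if "s \<in> {..N}" for s
      using g_nonneg[of s] c_pos[of s] that by (simp add: mult_nonneg_nonneg)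
  qed auto
  finally show ?thesis by auto
qed

lemma jgl_poly_root_in_interval:
  fixes a b t :: real
  assumes "a > -1" "b > -1" "N \<ge> 1" "poly (jgl_poly a b N) t = 0"
  shows "t \<in> {-1..1}"
proof (rule ccontr)
  assume t: "t \<notin> {-1..1}"
  then have "1 < \<bar>t\<bar> * \<bar>t\<bar>"
    by (intro less_1_mult) auto
  then have "poly [:1, 0, -1:] t \<noteq> 0"
    by (simp add: abs_mult_self_eq)
  with poly_pderiv_jacobi_poly_nonzero[OF assms(1-3) t] assms(4) show False
    by (simp add: jgl_poly_def)
qed

lemma mono_on_enumeration_endpoints:
  fixes x :: "nat \<Rightarrow> 'a::order"
  assumes "mono_on {..N} x" "x ` {..N} \<subseteq> {a..b}" "a \<in> x ` {..N}" "b \<in> x ` {..N}"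
  shows "x 0 = a" "x N = b"
proof -
  obtain i j where "i \<le> N" "x i = a" "j \<le> N" "x j = b"
    using assms(3,4) by auto
  moreover have "x 0 \<le> x i" "x j \<le> x N"
    using mono_onD[OF assms(1), of 0 i] mono_onD[OF assms(1), of j N] calculation by simp_all
  moreover have "x 0 \<in> {a..b}" "x N \<in> {a..b}"
    using assms(2) by auto
  ultimately show "x 0 = a" "x N = b"
    by auto
qed

lemma jgl_nodes_endpoints:
  fixes a b :: real
  assumes "a > -1" "b > -1" "N \<ge> 1" "strict_mono_on {..N} x"
    and "x ` {..N} = {t. poly (jgl_poly a b N) t = 0}"
  shows "x 0 = -1" "x N = 1"
proof -
  have "x ` {..N} \<subseteq> {-1..1}"
    using jgl_poly_root_in_interval[OF assms(1-3)] assms(5) by auto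
  moreover have "-1 \<in> x ` {..N}" "1 \<in> x ` {..N}"
    unfolding assms(5) by (simp_all add: jgl_poly_def)
  ultimately show "x 0 = -1" "x N = 1"
    using mono_on_enumeration_endpoints[OF strict_mono_on_imp_mono_on[OF assms(4)]] by blast+
qed

lemma sum_right_inverse_imp_left_inverse:
  fixes A B :: "nat \<Rightarrow> nat \<Rightarrow> 'a::field"
  assumes AB: "\<And>i j. i \<in> {1..n} \<Longrightarrow> j \<in> {1..n} \<Longrightarrow>
      (\<Sum>m=1..n. A i m * B m j) = (if i = j then 1 else 0)"
    and ij: "i \<in> {1..n}" "j \<in> {1..n}"
  shows "(\<Sum>m=1..n. B i m * A m j) = (if i = j then 1 else 0)"
proof -
  define mat_of :: "(nat \<Rightarrow> nat \<Rightarrow> 'a) \<Rightarrow> 'a mat"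
    where "mat_of F = mat n n (\<lambda>(i, j). F (Suc i) (Suc j))" for F
  have entry: "(mat_of F * mat_of G) $$ (i, j) = (\<Sum>m=1..n. F (Suc i) m * G m (Suc j))"
    if "i < n" "j < n" for F G i j
    using that by (simp add: mat_of_def scalar_prod_def atLeast0LessThan sum.atLeast1_atMost_eq)
  have AB_mat: "mat_of A * mat_of B = 1\<^sub>m n"
  proof (rule eq_matI)
    fix i j assume "i < dim_row (1\<^sub>m n)" "j < dim_col (1\<^sub>m n)"
    then show "(mat_of A * mat_of B) $$ (i, j) = 1\<^sub>m n $$ (i, j)"
      using AB[of "Suc i" "Suc j"] by (simp add: entry)
  qed (simp_all add: mat_of_def)
  have carrier: "mat_of F \<in> carrier_mat n n" for F
    by (simp add: mat_of_def)
  have BA_mat: "mat_of B * mat_of A = 1\<^sub>m n"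
    by (rule mat_mult_left_right_inverse[OF carrier carrier AB_mat])
  have "(\<Sum>m=1..n. B i m * A m j) = (mat_of B * mat_of A) $$ (i - 1, j - 1)"
    using entry[of "i - 1" "j - 1" B A] ij by auto
  also have "\<dots> = (if i = j then 1 else 0)"
    using BA_mat ij by auto
  finally show ?thesis .
qed

theorem theorem4p1:
  fixes N k :: nat and \<alpha> \<beta> \<mu> :: real
    and x :: "nat \<Rightarrow> real" and Q :: "nat \<Rightarrow> real poly"
  assumes N: "N \<ge> 2"
    and ab: "\<alpha> > -1" "\<beta> > -1"
    and nodes_mono: "strict_mono_on {..N} x"
    and nodes_zeros: "x ` {..N} = {t. poly (jgl_poly \<alpha> \<beta> N) t = 0}"
    and k: "k \<in> {1, 2}"
    and mu: "real k - 1 < \<mu>" "\<mu> < real k"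
    and Q_deg: "\<forall>j\<in>{1..N+1-k}. degree (Q j) \<le> N"
    and Q1: "k = 1 \<longrightarrow> (\<forall>j\<in>{1..N}.
              (\<forall>i\<in>{1..N}. caputo \<mu> (Q j) (x i) = (if i = j then 1 else 0))
              \<and> poly (Q j) (-1) = 0)"
    and Q2: "k = 2 \<longrightarrow> (\<forall>j\<in>{1..N-1}.
              (\<forall>i\<in>{1..N-1}. caputo \<mu> (Q j) (x i) = (if i = j then 1 else 0))
              \<and> poly (Q j) (-1) = 0 \<and> poly (Q j) 1 = 0)"
  shows "\<forall>l\<in>{1..N+1-k}. \<forall>j\<in>{1..N+1-k}.
           (\<Sum>m=1..N+1-k. poly (Q m) (x l) * caputo \<mu> (lagrange_basis x N j) (x m))
             = (if l = j then 1 else 0)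
         \<and> (\<Sum>m=1..N+1-k. caputo \<mu> (lagrange_basis x N m) (x l) * poly (Q j) (x m))
             = (if l = j then 1 else 0)"
proof -
  have inj: "inj_on x {..N}"
    using nodes_mono by (rule strict_mono_on_imp_inj_on)
  have x0: "x 0 = -1" and xN: "x N = 1"
    using jgl_nodes_endpoints[OF ab _ nodes_mono nodes_zeros] N by auto
  have k12: "k = 1 \<or> k = 2"
    using k by auto
  have vanish: "poly (Q j) (x m) = 0"
    if "j \<in> {1..N+1-k}" "m \<le> N" "m \<notin> {1..N+1-k}" for j m
  proof -
    have "m = 0 \<or> k = 2 \<and> m = N"
      using that k12 by auto
    then show ?thesis
      using Q1 Q2 that k12 x0 xN by auto
  qed
  have DQ: "(\<Sum>m=1..N+1-k. caputo \<mu> (lagrange_basis x N m) (x l) * poly (Q j) (x m))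
      = (if l = j then 1 else 0)" if "l \<in> {1..N+1-k}" "j \<in> {1..N+1-k}" for l j
  proof -
    have "caputo \<mu> (Q j) (x l)
        = (\<Sum>m=1..N+1-k. poly (Q j) (x m) * caputo \<mu> (lagrange_basis x N m) (x l))"
      using Q_deg k12 that by (intro caputo_eq_nodal_sum[OF mu inj _ _ vanish]) auto
    then show ?thesis
      using Q1 Q2 k12 that by (auto simp: mult.commute)
  qed
  moreover have "(\<Sum>m=1..N+1-k. poly (Q m) (x l) * caputo \<mu> (lagrange_basis x N j) (x m))
      = (if l = j then 1 else 0)" if "l \<in> {1..N+1-k}" "j \<in> {1..N+1-k}" for l j
    using sum_right_inverse_imp_left_inverse[OF DQ that] .
  ultimately show ?thesis
    by blast
qed

end
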